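(* Let $\alpha\in[1,3)$ and let $W$ be a graphon maximizing $d(H_1,W)-\alpha\, d(H_3,W)$ over all graphons. Then for almost every pair $(x,y)\in[0,1]^2$ with $W(x,y)<1$ it holds that $d_W(x)+d_W(y)\ge 1/2$.
   Context: A graphon is a symmetric measurable function $W:[0,1]^2\to[0,1]$. A $k$-vertex $W$-random graph is obtained by sampling $x_1,\dots,x_k$ independently and uniformly from $[0,1]$ and joining vertices $i$ and $j$ independently with probability $W(x_i,x_j)$; for a $k$-vertex graph $H$, $d(H,W)$ is the probability that the $k$-vertex $W$-random graph is isomorphic to $H$. The degree of $x\in[0,1]$ is $d_W(x)=\int_0^1 W(x,y)\,dy$. For $k\in\{0,1,2,3\}$, $H_k$ denotes the 3-vertex graph with exactly $k$ edges. *)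

theory Defs
  imports "HOL-Probability.Probability"
begin

text \<open>Graphons: symmetric measurable functions [0,1]^2 -> [0,1]. We represent them as
  functions real => real => real that are Borel measurable on the plane; only the
  values on the unit square matter.\<close>

definition graphon :: "(real \<Rightarrow> real \<Rightarrow> real) \<Rightarrow> bool" where
  "graphon W \<longleftrightarrow>
     (\<lambda>p. W (fst p) (snd p)) \<in> borel_measurable (lborel \<Otimes>\<^sub>M lborel) \<and>
     (\<forall>x\<in>{0..1}. \<forall>y\<in>{0..1}. W x y = W y x \<and> 0 \<le> W x y \<and> W x y \<le> 1)"

definition unif :: "real measure" where
  "unif = uniform_measure lborel {0..1}"

definition vpairs :: "nat \<Rightarrow> nat set set" where
  "vpairs k = {{i, j} | i j. i < j \<and> j < k}"

definition edge_prob :: "(real \<Rightarrow> real \<Rightarrow> real) \<Rightarrow> nat \<Rightarrow> nat set set \<Rightarrow> (nat \<Rightarrow> real) \<Rightarrow> real" where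
  "edge_prob W k F x =
     (\<Prod>e\<in>vpairs k. if e \<in> F then W (x (Min e)) (x (Max e)) else 1 - W (x (Min e)) (x (Max e)))"

definition ind_prob :: "(real \<Rightarrow> real \<Rightarrow> real) \<Rightarrow> nat \<Rightarrow> nat set set \<Rightarrow> real" where
  "ind_prob W k F = (\<integral>x. edge_prob W k F x \<partial>(PiM {..<k} (\<lambda>_. unif)))"

definition graph_iso :: "nat \<Rightarrow> nat set set \<Rightarrow> nat set set \<Rightarrow> bool" where
  "graph_iso k F G \<longleftrightarrow> (\<exists>\<pi>. \<pi> permutes {..<k} \<and> (\<lambda>e. \<pi> ` e) ` F = G)"

text \<open>d(H,W): probability that the k-vertex W-random graph is isomorphic to H
  (H given as an edge set on {0..<k}).\<close>
definition dens :: "nat \<Rightarrow> nat set set \<Rightarrow> (real \<Rightarrow> real \<Rightarrow> real) \<Rightarrow> real" where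
  "dens k H W = (\<Sum>F\<in>{F. F \<subseteq> vpairs k \<and> graph_iso k H F}. ind_prob W k F)"

text \<open>H_1: 3-vertex graph with one edge; H_3: the triangle.\<close>
definition H1 :: "nat set set" where "H1 = {{0, 1}}"
definition H3 :: "nat set set" where "H3 = vpairs 3"

definition degree :: "(real \<Rightarrow> real \<Rightarrow> real) \<Rightarrow> real \<Rightarrow> real" where
  "degree W x = (\<integral>y. W x y \<partial>unif)"

end

theory Submission
  imports Defs
begin

text \<open>
  With edge weights \<open>a = W x\<^sub>1 x\<^sub>2\<close>, \<open>b = W x\<^sub>1 x\<^sub>3\<close>, \<open>c = W x\<^sub>2 x\<^sub>3\<close> the objective
  \<open>d(H\<^sub>1,W) - \<alpha> d(H\<^sub>3,W)\<close> is the expectation of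
  \<open>\<Phi>(a,b,c) = a(1-b)(1-c) + (1-a)b(1-c) + (1-a)(1-b)c - \<alpha>abc\<close>.
  Let \<open>B\<close> be the set of pairs with \<open>W(x,y) < 1\<close> and \<open>d(x) + d(y) < 1/2\<close>, and raise \<open>W\<close> by
  \<open>\<epsilon>(1 - W)\<close> on \<open>B\<close>. As \<open>\<alpha> \<le> 3\<close>, the first-order change of \<open>\<Phi>\<close> along edge \<open>x\<^sub>1x\<^sub>2\<close> is at least
  \<open>1 - 2b - 2c\<close>, which integrates over \<open>x\<^sub>3\<close> to \<open>1 - 2d(x\<^sub>1) - 2d(x\<^sub>2) > 0\<close> on \<open>B\<close>, while the
  higher-order terms are at least \<open>-6\<epsilon>\<^sup>2\<close>. So if \<open>B\<close> had positive measure, a small \<open>\<epsilon>\<close> would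
  increase the objective.
\<close>

section \<open>Graphs on three vertices\<close>

lemma vpairs_3: "vpairs 3 = {{0,1},{0,2},{1,2}}"
proof -
  have "{0::nat,1} \<in> vpairs 3" "{0::nat,2} \<in> vpairs 3" "{1::nat,2} \<in> vpairs 3"
    unfolding vpairs_def by force+
  moreover have "vpairs 3 \<subseteq> {{0,1},{0,2},{1,2}}"
    unfolding vpairs_def by (auto simp: less_Suc_eq numeral_3_eq_3)
  ultimately show ?thesis by blast
qed

lemma permutes_lessThan_3_cases:
  assumes "\<pi> permutes {..<3::nat}"
  shows "(\<pi> 0, \<pi> 1, \<pi> 2) \<in> {(0,1,2),(0,2,1),(1,0,2),(1,2,0),(2,0,1),(2,1,0)}"
proof -
  have range: "\<pi> k \<in> {0,1,2}" if "k < 3" for k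
    using permutes_in_image[OF assms, of k] that by (auto simp: less_Suc_eq numeral_3_eq_3)
  have "\<pi> 0 \<noteq> \<pi> 1" "\<pi> 0 \<noteq> \<pi> 2" "\<pi> 1 \<noteq> \<pi> 2"
    using permutes_inj[OF assms] by (simp_all add: inj_eq)
  moreover have "\<pi> 0 \<in> {0,1,2}" "\<pi> 1 \<in> {0,1,2}" "\<pi> 2 \<in> {0,1,2}"
    by (rule range; simp)+
  ultimately show ?thesis
    by (elim insertE emptyE; simp)
qed

lemma transpose_permutes_lessThan_3:
  "a < 3 \<Longrightarrow> b < 3 \<Longrightarrow> Transposition.transpose a b permutes {..<3::nat}"
  by (rule permutes_swap_id) auto

lemma graphs_iso_H1: "{F. F \<subseteq> vpairs 3 \<and> graph_iso 3 H1 F} = {{{0,1}},{{0,2}},{{1,2}}}"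
proof -
  have iso: "graph_iso 3 H1 F \<longleftrightarrow> (\<exists>\<pi>. \<pi> permutes {..<3} \<and> F = {{\<pi> 0, \<pi> 1}})" for F
    unfolding graph_iso_def H1_def by auto
  have "F \<in> {{{0,1}},{{0,2}},{{1,2}}}" if F: "graph_iso 3 H1 F" for F
  proof -
    obtain \<pi> where \<pi>: "\<pi> permutes {..<3}" "F = {{\<pi> 0, \<pi> 1}}"
      using iso F by blast
    show ?thesis
      using permutes_lessThan_3_cases[OF \<pi>(1)] \<pi>(2) by (auto simp: doubleton_eq_iff)
  qed
  moreover have "graph_iso 3 H1 {{0,1}}"
    unfolding iso by (rule exI[of _ id]) (auto intro: permutes_id)
  moreover have "graph_iso 3 H1 {{0,2}}"
    unfolding iso by (rule exI[of _ "Transposition.transpose 1 2"])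
      (auto intro: transpose_permutes_lessThan_3)
  moreover have "graph_iso 3 H1 {{1,2}}"
    unfolding iso by (rule exI[of _ "Transposition.transpose 0 2"])
      (auto intro: transpose_permutes_lessThan_3 simp: doubleton_eq_iff)
  ultimately show ?thesis
    by (auto simp: vpairs_3)
qed

lemma graphs_iso_H3: "{F. F \<subseteq> vpairs 3 \<and> graph_iso 3 H3 F} = {vpairs 3}"
proof -
  have "F = vpairs 3" if iso: "graph_iso 3 H3 F" for F
  proof -
    obtain \<pi> where \<pi>: "\<pi> permutes {..<3}" "F = (\<lambda>e. \<pi> ` e) ` vpairs 3"
      using iso unfolding graph_iso_def H3_def by blast
    have "F = {{\<pi> 0, \<pi> 1},{\<pi> 0, \<pi> 2},{\<pi> 1, \<pi> 2}}"
      using \<pi>(2) by (simp add: vpairs_3)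
    with permutes_lessThan_3_cases[OF \<pi>(1)] show ?thesis
      unfolding vpairs_3 by (elim insertE emptyE; simp add: insert_commute)
  qed
  moreover have "graph_iso 3 H3 (vpairs 3)"
    unfolding graph_iso_def H3_def by (rule exI[of _ id]) (auto intro: permutes_id)
  ultimately show ?thesis by blast
qed

lemma edge_prob_3: "edge_prob V 3 F x =
  (if {0,1} \<in> F then V (x 0) (x 1) else 1 - V (x 0) (x 1)) *
  (if {0,2} \<in> F then V (x 0) (x 2) else 1 - V (x 0) (x 2)) *
  (if {1,2} \<in> F then V (x 1) (x 2) else 1 - V (x 1) (x 2))"
  unfolding edge_prob_def vpairs_3 by (simp add: doubleton_eq_iff numeral_2_eq_2)

section \<open>The uniform measure and its powers\<close>

lemma prob_space_unif: "prob_space unif"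
  unfolding unif_def by (rule prob_space_uniform_measure) auto

lemma AE_unif_unit_interval: "AE x in unif. x \<in> {0..1}"
  unfolding unif_def by (rule AE_uniform_measureI) auto

lemma sets_unif [simp, measurable_cong]: "sets unif = sets borel"
  unfolding unif_def by simp

lemma space_unif [simp]: "space unif = UNIV"
  unfolding unif_def by simp

lemma product_prob_space_unif: "product_prob_space (\<lambda>_::nat. unif)"
  by (rule product_prob_spaceI) (rule prob_space_unif)

definition unif3 :: "(nat \<Rightarrow> real) measure" where
  "unif3 = PiM {..<3} (\<lambda>_. unif)"

lemma prob_space_unif3: "prob_space unif3"
proof -
  interpret product_prob_space "\<lambda>_::nat. unif" "{..<3}"
    by (rule product_prob_space_unif)
  show ?thesis unfolding unif3_def by unfold_locales
qed

lemma measurable_unif3_component: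
  "i < 3 \<Longrightarrow> (\<lambda>x. x i) \<in> borel_measurable unif3"
  unfolding unif3_def by measurable

lemma AE_unif3_unit_cube: "AE x in unif3. x 0 \<in> {0..1} \<and> x 1 \<in> {0..1} \<and> x 2 \<in> {0..1}"
proof -
  interpret product_prob_space "\<lambda>_::nat. unif" "{..<3}"
    by (rule product_prob_space_unif)
  show ?thesis unfolding unif3_def
    by (intro eventually_conj AE_component AE_unif_unit_interval) auto
qed

lemma integrable_unif3_bounded:
  assumes "f \<in> borel_measurable unif3" "AE x in unif3. \<bar>f x\<bar> \<le> (B::real)"
  shows "integrable unif3 f"
proof -
  interpret prob_space unif3 by (rule prob_space_unif3)
  show ?thesis by (rule integrable_const_bound[where B = B]) (use assms in auto)
qed

lemma (in prob_space) abs_integral_le_bound: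
  assumes "\<And>x. \<bar>f x\<bar> \<le> (B::real)"
  shows "\<bar>integral\<^sup>L M f\<bar> \<le> B"
proof (cases "integrable M f")
  case True
  have "f x \<le> B" "- B \<le> f x" for x
    using assms[of x] by auto
  then have "integral\<^sup>L M f \<le> B" "- B \<le> integral\<^sup>L M f"
    by (auto intro!: integral_le_const integral_ge_const True)
  then show ?thesis by linarith
next
  case False
  then show ?thesis using assms[of undefined] by (simp add: not_integrable_integral_eq)
qed

lemma integral_PiM_insert_bounded:
  fixes f :: "('i \<Rightarrow> 'a) \<Rightarrow> real"
  assumes M: "prob_space M" and I: "finite I" "k \<notin> I"
    and f: "f \<in> borel_measurable (PiM (insert k I) (\<lambda>_. M))" "\<And>x. \<bar>f x\<bar> \<le> B"
  shows "integral\<^sup>L (PiM (insert k I) (\<lambda>_. M)) f = (\<integral>x. (\<integral>w. f (x(k := w)) \<partial>M) \<partial>PiM I (\<lambda>_. M))"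
proof -
  interpret product_prob_space "\<lambda>_. M" "insert k I"
    by (rule product_prob_spaceI) (rule M)
  show ?thesis
    by (rule product_integral_insert[OF I])
      (use f in \<open>auto intro!: P.integrable_const_bound[where B = B]\<close>)
qed

lemma integral_PiM_3:
  fixes f :: "('i \<Rightarrow> 'a) \<Rightarrow> real"
  assumes M: "prob_space M" and ijk: "i \<noteq> j" "i \<noteq> k" "j \<noteq> k"
    and f: "f \<in> borel_measurable (PiM {i,j,k} (\<lambda>_. M))" "\<And>x. \<bar>f x\<bar> \<le> B"
  shows "integral\<^sup>L (PiM {i,j,k} (\<lambda>_. M)) f =
    (\<integral>u. \<integral>v. \<integral>w. f ((\<lambda>_. undefined)(i := u, j := v, k := w)) \<partial>M \<partial>M \<partial>M)"
proof -
  interpret prob_space M by (rule M)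
  interpret product_prob_space "\<lambda>_. M" "{i}"
    by (rule product_prob_spaceI) (rule M)
  have ins: "{i,j,k} = insert k (insert j {i})"
    by auto
  define g where "g x = (\<integral>w. f (x(k := w)) \<partial>M)" for x
  define h where "h x = (\<integral>v. g (x(j := v)) \<partial>M)" for x
  have [measurable]: "f \<in> borel_measurable (PiM (insert k (insert j {i})) (\<lambda>_. M))"
    using f(1) by (simp only: ins)
  have g_meas [measurable]: "g \<in> borel_measurable (PiM (insert j {i}) (\<lambda>_. M))"
    unfolding g_def by measurable
  have g_bound: "\<bar>g x\<bar> \<le> B" for x
    unfolding g_def by (rule prob_space.abs_integral_le_bound[OF M f(2)])
  have h_meas [measurable]: "h \<in> borel_measurable (PiM {i} (\<lambda>_. M))"
    unfolding h_def by measurable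
  have "integral\<^sup>L (PiM {i,j,k} (\<lambda>_. M)) f = integral\<^sup>L (PiM (insert j {i}) (\<lambda>_. M)) g"
    unfolding ins g_def
    by (rule integral_PiM_insert_bounded[OF M _ _ _ f(2)]) (use ijk in auto)
  also have "\<dots> = integral\<^sup>L (PiM {i} (\<lambda>_. M)) h"
    unfolding h_def
    by (rule integral_PiM_insert_bounded[OF M _ _ g_meas g_bound])
      (use ijk in auto)
  also have "\<dots> = (\<integral>x. h ((\<lambda>_. undefined)(i := x i)) \<partial>PiM {i} (\<lambda>_. M))"
    by (rule Bochner_Integration.integral_cong)
      (auto simp: space_PiM PiE_def extensional_def intro!: arg_cong[where f = h])
  also have "\<dots> = (\<integral>u. h ((\<lambda>_. undefined)(i := u)) \<partial>M)"
    by (rule product_integral_singleton) measurable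
  finally show ?thesis
    by (simp add: g_def h_def)
qed

section \<open>The objective as an integral\<close>

definition objective_poly :: "real \<Rightarrow> real \<Rightarrow> real \<Rightarrow> real \<Rightarrow> real" where
  "objective_poly \<alpha> a b c = a*(1-b)*(1-c) + (1-a)*b*(1-c) + (1-a)*(1-b)*c - \<alpha>*a*b*c"

lemma objective_poly_shift:
  "objective_poly \<alpha> (a+e*p) (b+e*q) (c+e*r) - objective_poly \<alpha> a b c =
    e*(p*(1-2*b-2*c+(3-\<alpha>)*b*c) + q*(1-2*a-2*c+(3-\<alpha>)*a*c) + r*(1-2*a-2*b+(3-\<alpha>)*a*b))
  + e^2*(p*q*(-2+(3-\<alpha>)*c) + p*r*(-2+(3-\<alpha>)*b) + q*r*(-2+(3-\<alpha>)*a)) + e^3*(p*q*r*(3-\<alpha>))"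
  unfolding objective_poly_def power2_eq_square power3_eq_cube by (simp add: algebra_simps)

lemma objective_poly_shift_ge:
  fixes a b c p q r e \<alpha> :: real
  assumes "0 \<le> a" "a \<le> 1" "0 \<le> b" "b \<le> 1" "0 \<le> c" "c \<le> 1"
    and "0 \<le> p" "p \<le> 1" "0 \<le> q" "q \<le> 1" "0 \<le> r" "r \<le> 1" "0 \<le> e" "\<alpha> \<le> 3"
  shows "e*(p*(1-2*b-2*c) + q*(1-2*a-2*c) + r*(1-2*a-2*b)) - 6*e^2 \<le>
    objective_poly \<alpha> (a+e*p) (b+e*q) (c+e*r) - objective_poly \<alpha> a b c"
proof -
  have second_order: "-2 \<le> x*y*(-2+(3-\<alpha>)*z)"
    if "0 \<le> x" "x \<le> 1" "0 \<le> y" "y \<le> 1" "0 \<le> z" for x y z :: real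
  proof -
    have "x*y*(-2) \<le> x*y*(-2+(3-\<alpha>)*z)"
      using that assms by (intro mult_left_mono) auto
    moreover have "x*y \<le> 1"
      using that by (simp add: mult_le_one)
    ultimately show ?thesis by linarith
  qed
  have first_order: "x*(1-2*y-2*z) \<le> x*(1-2*y-2*z+(3-\<alpha>)*y*z)"
    if "0 \<le> x" "0 \<le> y" "0 \<le> z" for x y z :: real
    using that assms by (intro mult_left_mono) auto
  have "e*(p*(1-2*b-2*c) + q*(1-2*a-2*c) + r*(1-2*a-2*b)) \<le>
      e*(p*(1-2*b-2*c+(3-\<alpha>)*b*c) + q*(1-2*a-2*c+(3-\<alpha>)*a*c) + r*(1-2*a-2*b+(3-\<alpha>)*a*b))"
    using first_order[of p b c] first_order[of q a c] first_order[of r a b] assms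
    by (intro mult_left_mono) auto
  moreover have "e^2*(-6) \<le> e^2*(p*q*(-2+(3-\<alpha>)*c) + p*r*(-2+(3-\<alpha>)*b) + q*r*(-2+(3-\<alpha>)*a))"
    using second_order[of p q c] second_order[of p r b] second_order[of q r a] assms
    by (intro mult_left_mono) auto
  moreover have "0 \<le> e^3*(p*q*r*(3-\<alpha>))"
    using assms by simp
  ultimately show ?thesis
    unfolding objective_poly_shift by linarith
qed

lemma graphon_sym: "graphon W \<Longrightarrow> x \<in> {0..1} \<Longrightarrow> y \<in> {0..1} \<Longrightarrow> W x y = W y x"
  unfolding graphon_def by auto

lemma graphon_bounds:
  "graphon W \<Longrightarrow> x \<in> {0..1} \<Longrightarrow> y \<in> {0..1} \<Longrightarrow> 0 \<le> W x y \<and> W x y \<le> 1"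
  unfolding graphon_def by auto

lemma graphon_measurable_comp:
  assumes "graphon V" "f \<in> borel_measurable M" "g \<in> borel_measurable M"
  shows "(\<lambda>x. V (f x) (g x)) \<in> borel_measurable M"
proof -
  have sets: "sets (lborel \<Otimes>\<^sub>M lborel) = sets (borel \<Otimes>\<^sub>M (borel::real measure))"
    by (rule sets_pair_measure_cong) simp_all
  have "(\<lambda>p. V (fst p) (snd p)) \<in> borel_measurable (borel \<Otimes>\<^sub>M borel)"
    using assms(1) unfolding graphon_def measurable_cong_sets[OF sets refl] by simp
  from measurable_compose[OF measurable_Pair[OF assms(2,3)] this] show ?thesis
    by simp
qed

lemma edge_prob_bounds:
  assumes V: "graphon V" and x: "\<And>i. i < k \<Longrightarrow> x i \<in> {0..1}"
  shows "0 \<le> edge_prob V k F x \<and> edge_prob V k F x \<le> 1"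
proof -
  have "Min e < k \<and> Max e < k" if "e \<in> vpairs k" for e
    using that unfolding vpairs_def by auto
  then have "0 \<le> V (x (Min e)) (x (Max e)) \<and> V (x (Min e)) (x (Max e)) \<le> 1"
    if "e \<in> vpairs k" for e
    using V x that unfolding graphon_def by simp
  then show ?thesis
    unfolding edge_prob_def by (auto intro!: prod_nonneg prod_le_1)
qed

lemma integrable_edge_prob_3:
  assumes V: "graphon V"
  shows "integrable unif3 (edge_prob V 3 F)"
proof (rule integrable_unif3_bounded[where B = 1])
  note graphon_measurable_comp[OF V, measurable (raw)]
  note measurable_unif3_component[of 0, measurable] measurable_unif3_component[of 1, measurable]
    measurable_unif3_component[of 2, measurable]
  show "edge_prob V 3 F \<in> borel_measurable unif3"
    unfolding edge_prob_3[abs_def] by measurable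
  show "AE x in unif3. \<bar>edge_prob V 3 F x\<bar> \<le> 1"
    using AE_unif3_unit_cube
  proof eventually_elim
    case (elim x)
    moreover have "i = 0 \<or> i = 1 \<or> i = 2" if "i < 3" for i :: nat
      using that by linarith
    ultimately have "x i \<in> {0..1}" if "i < 3" for i
      using that by blast
    then show ?case
      using edge_prob_bounds[OF V] by (simp add: abs_le_iff)
  qed
qed

lemma graphon_objective_eq_integral:
  assumes V: "graphon V"
  shows "integrable unif3 (\<lambda>x. objective_poly \<alpha> (V (x 0) (x 1)) (V (x 0) (x 2)) (V (x 1) (x 2)))"
    and "dens 3 H1 V - \<alpha> * dens 3 H3 V =
      (\<integral>x. objective_poly \<alpha> (V (x 0) (x 1)) (V (x 0) (x 2)) (V (x 1) (x 2)) \<partial>unif3)"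
proof -
  have poly: "(\<lambda>x. objective_poly \<alpha> (V (x 0) (x 1)) (V (x 0) (x 2)) (V (x 1) (x 2))) =
    (\<lambda>x. edge_prob V 3 {{0,1}} x + edge_prob V 3 {{0,2}} x + edge_prob V 3 {{1,2}} x
      - \<alpha> * edge_prob V 3 (vpairs 3) x)"
    by (simp add: objective_poly_def edge_prob_3 vpairs_3 doubleton_eq_iff algebra_simps)
  show "integrable unif3 (\<lambda>x. objective_poly \<alpha> (V (x 0) (x 1)) (V (x 0) (x 2)) (V (x 1) (x 2)))"
    unfolding poly using integrable_edge_prob_3[OF V] by simp
  have "dens 3 H1 V = ind_prob V 3 {{0,1}} + ind_prob V 3 {{0,2}} + ind_prob V 3 {{1,2}}"
    unfolding dens_def graphs_iso_H1 by (simp add: doubleton_eq_iff)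
  moreover have "dens 3 H3 V = ind_prob V 3 (vpairs 3)"
    unfolding dens_def graphs_iso_H3 by simp
  ultimately show "dens 3 H1 V - \<alpha> * dens 3 H3 V =
      (\<integral>x. objective_poly \<alpha> (V (x 0) (x 1)) (V (x 0) (x 2)) (V (x 1) (x 2)) \<partial>unif3)"
    unfolding poly ind_prob_def unif3_def[symmetric] using integrable_edge_prob_3[OF V]
    by (simp add: integral_add integral_diff)
qed

section \<open>The perturbation\<close>

text \<open>A graphon is only constrained on the unit square. Evaluating it at clipped arguments makes
  the auxiliary functions below bounded and symmetric everywhere, and the uniform
  measure does not see the difference.\<close>

definition clip01 :: "real \<Rightarrow> real" where
  "clip01 x = max 0 (min 1 x)"

definition clip_graphon :: "(real \<Rightarrow> real \<Rightarrow> real) \<Rightarrow> real \<Rightarrow> real \<Rightarrow> real" where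
  "clip_graphon W x y = W (clip01 x) (clip01 y)"

definition clip_degree :: "(real \<Rightarrow> real \<Rightarrow> real) \<Rightarrow> real \<Rightarrow> real" where
  "clip_degree W x = degree W (clip01 x)"

definition headroom :: "(real \<Rightarrow> real \<Rightarrow> real) \<Rightarrow> real \<Rightarrow> real \<Rightarrow> real" where
  "headroom W x y =
    (if clip_graphon W x y < 1 \<and> clip_degree W x + clip_degree W y < 1/2
     then 1 - clip_graphon W x y else 0)"

text \<open>The coefficient of \<open>\<epsilon>\<close> in the change of \<open>\<Phi>\<close> due to edge \<open>uv\<close>, third vertex \<open>w\<close>, with the
  nonnegative \<open>(3 - \<alpha>)\<close>-term dropped.\<close>

definition linear_gain :: "(real \<Rightarrow> real \<Rightarrow> real) \<Rightarrow> real \<Rightarrow> real \<Rightarrow> real \<Rightarrow> real" where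
  "linear_gain W u v w = headroom W u v * (1 - 2 * clip_graphon W u w - 2 * clip_graphon W v w)"

definition edge_gain :: "(real \<Rightarrow> real \<Rightarrow> real) \<Rightarrow> real \<Rightarrow> real \<Rightarrow> real" where
  "edge_gain W u v = headroom W u v * (1 - 2 * clip_degree W u - 2 * clip_degree W v)"

lemma clip01_mem: "clip01 x \<in> {0..1}"
  by (simp add: clip01_def)

lemma clip01_id: "x \<in> {0..1} \<Longrightarrow> clip01 x = x"
  by (simp add: clip01_def)

lemma measurable_clip01 [measurable (raw)]:
  assumes [measurable]: "f \<in> borel_measurable M"
  shows "(\<lambda>x. clip01 (f x)) \<in> borel_measurable M"
  unfolding clip01_def by measurable

lemma AE_pair_unif_unit_square: "AE p in unif \<Otimes>\<^sub>M unif. fst p \<in> {0..1} \<and> snd p \<in> {0..1}"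
proof -
  interpret pair_sigma_finite unif unif
    by (intro pair_sigma_finite.intro prob_space_imp_sigma_finite prob_space_unif)
  show ?thesis
  proof (rule AE_pair_measure)
    show "AE x in unif. AE y in unif. fst (x, y) \<in> {0..1} \<and> snd (x, y) \<in> {0..1}"
      using AE_unif_unit_interval
      by eventually_elim (use AE_unif_unit_interval in \<open>auto elim: eventually_mono\<close>)
  qed measurable
qed

context
  fixes W :: "real \<Rightarrow> real \<Rightarrow> real"
  assumes W: "graphon W"
begin

lemmas measurable_graphon [measurable (raw)] = graphon_measurable_comp[OF W]

lemma measurable_clip_graphon [measurable (raw)]:
  assumes [measurable]: "f \<in> borel_measurable M" "g \<in> borel_measurable M"
  shows "(\<lambda>x. clip_graphon W (f x) (g x)) \<in> borel_measurable M"
  unfolding clip_graphon_def by measurable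

lemma clip_graphon_sym: "clip_graphon W x y = clip_graphon W y x"
  unfolding clip_graphon_def using graphon_sym[OF W] clip01_mem by blast

lemma clip_graphon_bounds: "0 \<le> clip_graphon W x y" "clip_graphon W x y \<le> 1"
  unfolding clip_graphon_def using graphon_bounds[OF W] clip01_mem by blast+

lemma clip_graphon_eq: "x \<in> {0..1} \<Longrightarrow> y \<in> {0..1} \<Longrightarrow> clip_graphon W x y = W x y"
  unfolding clip_graphon_def by (simp add: clip01_id)

lemma integrable_clip_graphon: "integrable unif (\<lambda>y. clip_graphon W x y)"
proof -
  interpret prob_space unif by (rule prob_space_unif)
  show ?thesis
    by (rule integrable_const_bound[where B = 1]) (auto simp: clip_graphon_bounds)
qed

lemma integral_clip_graphon: "(\<integral>y. clip_graphon W x y \<partial>unif) = clip_degree W x"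
  unfolding clip_degree_def degree_def
proof (rule integral_cong_AE)
  show "AE y in unif. clip_graphon W x y = W (clip01 x) y"
    using AE_unif_unit_interval by eventually_elim (simp add: clip_graphon_def clip01_id)
qed measurable

lemma clip_degree_bounds: "0 \<le> clip_degree W x" "clip_degree W x \<le> 1"
proof -
  interpret prob_space unif by (rule prob_space_unif)
  show "0 \<le> clip_degree W x" "clip_degree W x \<le> 1"
    unfolding integral_clip_graphon[symmetric]
    by (auto intro!: integral_ge_const integral_le_const integrable_clip_graphon
        simp: clip_graphon_bounds)
qed

lemma measurable_clip_degree [measurable (raw)]:
  "f \<in> borel_measurable M \<Longrightarrow> (\<lambda>x. clip_degree W (f x)) \<in> borel_measurable M"
proof -
  interpret prob_space unif by (rule prob_space_unif)
  have "clip_degree W = (\<lambda>x. \<integral>y. clip_graphon W x y \<partial>unif)"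
    by (simp add: integral_clip_graphon)
  also have "\<dots> \<in> borel_measurable borel"
    by (rule borel_measurable_lebesgue_integral) measurable
  finally show "f \<in> borel_measurable M \<Longrightarrow> (\<lambda>x. clip_degree W (f x)) \<in> borel_measurable M"
    by (rule measurable_compose[rotated])
qed

lemma measurable_headroom [measurable (raw)]:
  assumes [measurable]: "f \<in> borel_measurable M" "g \<in> borel_measurable M"
  shows "(\<lambda>x. headroom W (f x) (g x)) \<in> borel_measurable M"
  unfolding headroom_def by measurable

lemma headroom_sym: "headroom W x y = headroom W y x"
  unfolding headroom_def by (simp add: clip_graphon_sym add.commute)

lemma headroom_bounds: "0 \<le> headroom W x y" "headroom W x y \<le> 1"
  unfolding headroom_def using clip_graphon_bounds[of x y] by auto

lemma measurable_linear_gain [measurable (raw)]: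
  assumes [measurable]: "f \<in> borel_measurable M" "g \<in> borel_measurable M" "h \<in> borel_measurable M"
  shows "(\<lambda>x. linear_gain W (f x) (g x) (h x)) \<in> borel_measurable M"
  unfolding linear_gain_def by measurable

lemma abs_linear_gain_le: "\<bar>linear_gain W u v w\<bar> \<le> 3"
proof -
  have "\<bar>1 - 2 * clip_graphon W u w - 2 * clip_graphon W v w\<bar> \<le> 3"
    using clip_graphon_bounds[of u w] clip_graphon_bounds[of v w] by (simp add: abs_le_iff)
  then show ?thesis
    unfolding linear_gain_def abs_mult
    using headroom_bounds[of u v] mult_left_le_one_le[of "\<bar>1 - 2 * clip_graphon W u w - 2 * clip_graphon W v w\<bar>" "headroom W u v"]
    by simp
qed

lemma integral_linear_gain: "(\<integral>w. linear_gain W u v w \<partial>unif) = edge_gain W u v"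
proof -
  interpret U: prob_space unif by (rule prob_space_unif)
  have "(\<integral>w. 1 - 2 * clip_graphon W u w - 2 * clip_graphon W v w \<partial>unif)
      = 1 - 2 * clip_degree W u - 2 * clip_degree W v"
    using integrable_clip_graphon[of u] integrable_clip_graphon[of v]
    using U.prob_space by (simp add: integral_clip_graphon)
  then show ?thesis
    unfolding linear_gain_def edge_gain_def by simp
qed

lemma integral_unif3_linear_gain:
  assumes ijk: "{..<3} = {i,j,k}" "i \<noteq> j" "i \<noteq> k" "j \<noteq> k"
  shows "(\<integral>x. linear_gain W (x i) (x j) (x k) \<partial>unif3) = (\<integral>u. \<integral>v. edge_gain W u v \<partial>unif \<partial>unif)"
proof -
  have "(\<integral>x. linear_gain W (x i) (x j) (x k) \<partial>unif3) =
      (\<integral>u. \<integral>v. \<integral>w. linear_gain W u v w \<partial>unif \<partial>unif \<partial>unif)"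
    unfolding unif3_def ijk(1)
    by (subst integral_PiM_3[OF prob_space_unif ijk(2-4) _ abs_linear_gain_le]) (use ijk in auto)
  then show ?thesis
    by (simp add: integral_linear_gain)
qed

lemma integral_unif3_first_order:
  "(\<integral>x. linear_gain W (x 0) (x 1) (x 2) + linear_gain W (x 0) (x 2) (x 1)
      + linear_gain W (x 1) (x 2) (x 0) \<partial>unif3) = 3 * (\<integral>u. \<integral>v. edge_gain W u v \<partial>unif \<partial>unif)"
proof -
  have int: "integrable unif3 (\<lambda>x. linear_gain W (x i) (x j) (x k))"
    if "i < 3" "j < 3" "k < 3" for i j k
  proof (rule integrable_unif3_bounded[where B = 3])
    note [measurable] = that[THEN measurable_unif3_component]
    show "(\<lambda>x. linear_gain W (x i) (x j) (x k)) \<in> borel_measurable unif3"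
      by measurable
  qed (simp add: abs_linear_gain_le)
  have "{..<3::nat} = {0,1,2}" "{..<3::nat} = {0,2,1}" "{..<3::nat} = {1,2,0}"
    by auto
  then show ?thesis
    using int[of 0 1 2] int[of 0 2 1] int[of 1 2 0]
    by (simp add: integral_unif3_linear_gain)
qed

lemma edge_gain_nonneg: "0 \<le> edge_gain W u v"
  unfolding edge_gain_def headroom_def by auto

lemma edge_gain_pos:
  "clip_graphon W u v < 1 \<Longrightarrow> clip_degree W u + clip_degree W v < 1/2 \<Longrightarrow> 0 < edge_gain W u v"
  unfolding edge_gain_def headroom_def by auto

lemma integral_edge_gain_pos:
  assumes "\<not> (AE p in unif \<Otimes>\<^sub>M unif.
    W (fst p) (snd p) < 1 \<longrightarrow> degree W (fst p) + degree W (snd p) \<ge> 1/2)"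
  shows "0 < (\<integral>u. \<integral>v. edge_gain W u v \<partial>unif \<partial>unif)"
proof -
  interpret pair_prob_space unif unif
    by (intro pair_prob_space.intro pair_sigma_finite.intro prob_space_imp_sigma_finite
        prob_space_unif)
  have "\<bar>edge_gain W u v\<bar> \<le> 3" for u v
  proof -
    have "\<bar>1 - 2 * clip_degree W u - 2 * clip_degree W v\<bar> \<le> 3"
      using clip_degree_bounds[of u] clip_degree_bounds[of v] by (simp add: abs_le_iff)
    then show ?thesis
      unfolding edge_gain_def abs_mult
      using headroom_bounds[of u v] mult_left_le_one_le[of "\<bar>1 - 2 * clip_degree W u - 2 * clip_degree W v\<bar>" "headroom W u v"]
      by simp
  qed
  then have int: "integrable (unif \<Otimes>\<^sub>M unif) (\<lambda>p. edge_gain W (fst p) (snd p))"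
    unfolding edge_gain_def by (intro integrable_const_bound[where B = 3]) auto
  have "\<not> (AE p in unif \<Otimes>\<^sub>M unif. edge_gain W (fst p) (snd p) = 0)"
  proof
    assume "AE p in unif \<Otimes>\<^sub>M unif. edge_gain W (fst p) (snd p) = 0"
    with AE_pair_unif_unit_square
    have "AE p in unif \<Otimes>\<^sub>M unif.
        W (fst p) (snd p) < 1 \<longrightarrow> degree W (fst p) + degree W (snd p) \<ge> 1/2"
    proof eventually_elim
      case (elim p)
      show ?case
      proof (rule impI, rule ccontr)
        assume "W (fst p) (snd p) < 1" "\<not> 1/2 \<le> degree W (fst p) + degree W (snd p)"
        with elim have "0 < edge_gain W (fst p) (snd p)"
          by (intro edge_gain_pos) (auto simp: clip_graphon_eq clip_degree_def clip01_id)
        with elim show False by simp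
      qed
    qed
    with assms show False ..
  qed
  then have "0 < (\<integral>p. edge_gain W (fst p) (snd p) \<partial>(unif \<Otimes>\<^sub>M unif))"
    using integral_nonneg_eq_0_iff_AE[OF int] edge_gain_nonneg
    by (auto intro!: le_neq_trans integral_nonneg_AE)
  then show ?thesis
    using integral_fst'[OF int] by simp
qed

lemma graphon_add_headroom:
  assumes "0 \<le> \<epsilon>" "\<epsilon> \<le> 1"
  shows "graphon (\<lambda>u v. W u v + \<epsilon> * headroom W u v)"
  unfolding graphon_def
proof (intro conjI ballI)
  show "(\<lambda>p. W (fst p) (snd p) + \<epsilon> * headroom W (fst p) (snd p)) \<in> borel_measurable (lborel \<Otimes>\<^sub>M lborel)"
    by measurable
  fix x y :: real
  assume xy: "x \<in> {0..1}" "y \<in> {0..1}"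
  show "W x y + \<epsilon> * headroom W x y = W y x + \<epsilon> * headroom W y x"
    using graphon_sym[OF W xy] headroom_sym[of x y] by simp
  show "0 \<le> W x y + \<epsilon> * headroom W x y"
    using graphon_bounds[OF W xy] headroom_bounds[of x y] assms by simp
  have "\<epsilon> * headroom W x y \<le> 1 - W x y"
    using graphon_bounds[OF W xy] assms
    by (auto simp: headroom_def clip_graphon_eq[OF xy] intro: mult_left_le_one_le)
  then show "W x y + \<epsilon> * headroom W x y \<le> 1"
    by simp
qed

lemma objective_poly_add_headroom_ge:
  assumes "\<alpha> \<le> 3" "0 \<le> \<epsilon>" and uvw: "u \<in> {0..1}" "v \<in> {0..1}" "w \<in> {0..1}"
  shows "\<epsilon> * (linear_gain W u v w + linear_gain W u w v + linear_gain W v w u) - 6 * \<epsilon>^2 \<le>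
    objective_poly \<alpha> (W u v + \<epsilon> * headroom W u v) (W u w + \<epsilon> * headroom W u w)
      (W v w + \<epsilon> * headroom W v w) - objective_poly \<alpha> (W u v) (W u w) (W v w)"
proof -
  have "clip_graphon W u v = W u v" "clip_graphon W v u = W u v"
    "clip_graphon W u w = W u w" "clip_graphon W w u = W u w"
    "clip_graphon W v w = W v w" "clip_graphon W w v = W v w"
    using uvw clip_graphon_eq clip_graphon_sym by metis+
  then have "linear_gain W u v w + linear_gain W u w v + linear_gain W v w u =
      headroom W u v * (1 - 2 * W u w - 2 * W v w) + headroom W u w * (1 - 2 * W u v - 2 * W v w)
      + headroom W v w * (1 - 2 * W u v - 2 * W u w)"
    unfolding linear_gain_def by simp
  moreover have "0 \<le> W u v \<and> W u v \<le> 1" "0 \<le> W u w \<and> W u w \<le> 1" "0 \<le> W v w \<and> W v w \<le> 1"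
    using uvw graphon_bounds[OF W] by auto
  ultimately show ?thesis
    using objective_poly_shift_ge[of "W u v" "W u w" "W v w" "headroom W u v" "headroom W u w"
        "headroom W v w" \<epsilon> \<alpha>] headroom_bounds assms(1,2)
    by simp
qed

lemma objective_add_headroom_ge:
  fixes \<alpha> \<epsilon> :: real
  defines "W' \<equiv> \<lambda>u v. W u v + \<epsilon> * headroom W u v"
  assumes "\<alpha> \<le> 3" "0 \<le> \<epsilon>" "\<epsilon> \<le> 1"
  shows "3 * \<epsilon> * (\<integral>u. \<integral>v. edge_gain W u v \<partial>unif \<partial>unif) - 6 * \<epsilon>^2 \<le>
    (dens 3 H1 W' - \<alpha> * dens 3 H3 W') - (dens 3 H1 W - \<alpha> * dens 3 H3 W)"
proof -
  interpret prob_space unif3 by (rule prob_space_unif3)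
  note [measurable] = measurable_unif3_component[of 0] measurable_unif3_component[of 1]
    measurable_unif3_component[of 2]
  define \<Phi> where "\<Phi> V x = objective_poly \<alpha> (V (x 0) (x 1)) (V (x 0) (x 2)) (V (x 1) (x 2))"
    for V and x :: "nat \<Rightarrow> real"
  define L where "L x = linear_gain W (x 0) (x 1) (x 2) + linear_gain W (x 0) (x 2) (x 1)
    + linear_gain W (x 1) (x 2) (x 0)" for x :: "nat \<Rightarrow> real"
  have W': "graphon W'"
    unfolding W'_def using assms(3,4) by (rule graphon_add_headroom)
  have int_L: "integrable unif3 L"
  proof (rule integrable_unif3_bounded[where B = 9])
    show "L \<in> borel_measurable unif3"
      unfolding L_def by measurable
    have "\<bar>L x\<bar> \<le> 9" for x
      using abs_linear_gain_le[of "x 0" "x 1" "x 2"] abs_linear_gain_le[of "x 0" "x 2" "x 1"]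
        abs_linear_gain_le[of "x 1" "x 2" "x 0"]
      unfolding L_def abs_le_iff by linarith
    then show "AE x in unif3. \<bar>L x\<bar> \<le> 9"
      by simp
  qed
  have "3 * \<epsilon> * (\<integral>u. \<integral>v. edge_gain W u v \<partial>unif \<partial>unif) - 6 * \<epsilon>^2 = (\<integral>x. \<epsilon> * L x - 6 * \<epsilon>^2 \<partial>unif3)"
  proof -
    have "(\<integral>x. \<epsilon> * L x - 6 * \<epsilon>^2 \<partial>unif3) = \<epsilon> * integral\<^sup>L unif3 L - 6 * \<epsilon>^2"
      using int_L prob_space by (simp add: Bochner_Integration.integral_diff)
    then show ?thesis
      unfolding L_def integral_unif3_first_order by simp
  qed
  also have "\<dots> \<le> (\<integral>x. \<Phi> W' x - \<Phi> W x \<partial>unif3)"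
  proof (rule integral_mono_AE)
    show "integrable unif3 (\<lambda>x. \<epsilon> * L x - 6 * \<epsilon>^2)"
      using int_L by simp
    show "integrable unif3 (\<lambda>x. \<Phi> W' x - \<Phi> W x)"
      unfolding \<Phi>_def using graphon_objective_eq_integral(1)[OF W'] graphon_objective_eq_integral(1)[OF W]
      by simp
    show "AE x in unif3. \<epsilon> * L x - 6 * \<epsilon>^2 \<le> \<Phi> W' x - \<Phi> W x"
      using AE_unif3_unit_cube
      by eventually_elim (use assms in \<open>simp add: \<Phi>_def L_def W'_def objective_poly_add_headroom_ge\<close>)
  qed
  also have "\<dots> = (dens 3 H1 W' - \<alpha> * dens 3 H3 W') - (dens 3 H1 W - \<alpha> * dens 3 H3 W)"
    unfolding \<Phi>_def graphon_objective_eq_integral(2)[OF W'] graphon_objective_eq_integral(2)[OF W]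
    using graphon_objective_eq_integral(1)[OF W'] graphon_objective_eq_integral(1)[OF W]
    by (rule Bochner_Integration.integral_diff)
  finally show ?thesis .
qed

end

theorem lemma8:
  fixes \<alpha> :: real and W :: "real \<Rightarrow> real \<Rightarrow> real"
  assumes "1 \<le> \<alpha>" and "\<alpha> < 3"
    and "graphon W"
    and "\<forall>W'. graphon W' \<longrightarrow>
           dens 3 H1 W' - \<alpha> * dens 3 H3 W' \<le> dens 3 H1 W - \<alpha> * dens 3 H3 W"
  shows "AE p in unif \<Otimes>\<^sub>M unif.
           W (fst p) (snd p) < 1 \<longrightarrow> degree W (fst p) + degree W (snd p) \<ge> 1/2"
proof (rule ccontr)
  assume not_AE: "\<not> ?thesis"
  define J where "J = (\<integral>u. \<integral>v. edge_gain W u v \<partial>unif \<partial>unif)"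
  have "0 < J"
    unfolding J_def using not_AE by (rule integral_edge_gain_pos[OF assms(3)])
  define \<epsilon> where "\<epsilon> = min 1 (J / 4)"
  have \<epsilon>: "0 < \<epsilon>" "\<epsilon> \<le> 1" "\<epsilon> \<le> J / 4"
    using \<open>0 < J\<close> by (auto simp: \<epsilon>_def)
  define W' where "W' = (\<lambda>u v. W u v + \<epsilon> * headroom W u v)"
  have "3 * \<epsilon> * J - 6 * \<epsilon>^2 \<le>
      (dens 3 H1 W' - \<alpha> * dens 3 H3 W') - (dens 3 H1 W - \<alpha> * dens 3 H3 W)"
    unfolding J_def W'_def using assms(2) \<epsilon> by (intro objective_add_headroom_ge[OF assms(3)]) auto
  moreover have "graphon W'"
    unfolding W'_def using \<epsilon> by (intro graphon_add_headroom[OF assms(3)]) auto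
  then have "dens 3 H1 W' - \<alpha> * dens 3 H3 W' \<le> dens 3 H1 W - \<alpha> * dens 3 H3 W"
    using assms(4) by blast
  ultimately have "3 * \<epsilon> * J - 6 * \<epsilon>^2 \<le> 0"
    by linarith
  then have "\<epsilon> * (3 * J - 6 * \<epsilon>) \<le> 0"
    by (simp add: algebra_simps power2_eq_square)
  with \<epsilon> \<open>0 < J\<close> show False
    by (simp add: mult_le_0_iff)
qed

end
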